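(* The map $F:K\times\mathbf S^k_{++}\to\mathbb{R}\cup\{\infty\}$ is continuous (with $\mathbb{R}\cup\{\infty\}$ carrying its order topology).
   Context: $\mathbf S^k_{++}$ is the set of $k\times k$ symmetric positive-definite matrices. $\mathcal I$ is a collection of nonempty subsets of $\{1,\dots,k\}$, $a\in\mathbb{R}^k\setminus\{0\}$. $P_I:\mathbb{R}^k\to\mathbb{R}^{|I|}$ is the coordinate projection onto $I$, and for $A\in\mathbf S^k_{++}$, $A_I^\dagger:=P_I^\top(P_IAP_I^\top)^{-1}P_I$. Costs $c_I\in\mathbb{R}^m_{\ge0}$ and $B_0\in\mathbb{R}^m_{>0}$; vector inequalities componentwise. $K=\{\underline\nu\in\mathbb{R}^{\mathcal I}:\underline\nu\ge0,\ \sum_I\nu_Ic_I\le B_0\}$. $F(\underline\nu,A)=a^\top(\sum_I\nu_IA_I^\dagger)^\dagger a$ if $a\in\operatorname{range}(\sum_I\nu_IA_I^\dagger)$ and $F(\underline\nu,A)=\infty$ otherwise; $\dagger$ denotes the Moore–Penrose pseudo-inverse. *)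

theory Defs
  imports "HOL-Analysis.Analysis"
begin

text \<open>Symmetric positive-definite k x k matrices; the index set {1..k} is the finite type 'k.\<close>
definition spd :: "(real^'k^'k) set" where
  "spd = {A. transpose A = A \<and> (\<forall>x. x \<noteq> 0 \<longrightarrow> x \<bullet> (A *v x) > 0)}"

definition mp_pinv :: "real^'n^'n \<Rightarrow> real^'n^'n" where
  "mp_pinv M = (THE X. M ** X ** M = M \<and> X ** M ** X = X \<and>
       transpose (M ** X) = M ** X \<and> transpose (X ** M) = X ** M)"

text \<open>Coordinate projection P_I : R^k \<rightarrow> R^|I| is represented by restriction to I, and
  P_I^T by extension by zero.  Then A_I^dagger = P_I^T (P_I A P_I^T)^{-1} P_I maps v to the
  unique x supported on I whose image A x agrees with v on I.\<close>
definition restr_inv :: "real^'k^'k \<Rightarrow> 'k set \<Rightarrow> real^'k^'k" where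
  "restr_inv A I = matrix (\<lambda>v. THE x. (\<forall>i. i \<notin> I \<longrightarrow> x $ i = 0) \<and>
                                       (\<forall>i\<in>I. (A *v x) $ i = v $ i))"

definition feasK :: "('k::finite) set set \<Rightarrow> ('k set \<Rightarrow> real^'m) \<Rightarrow> real^'m \<Rightarrow> (real^('k set)) set" where
  "feasK \<I> c B0 = {\<nu>. (\<forall>I. I \<notin> \<I> \<longrightarrow> \<nu> $ I = 0) \<and> (\<forall>I\<in>\<I>. \<nu> $ I \<ge> 0) \<and>
                      (\<forall>j. (\<Sum>I\<in>\<I>. \<nu> $ I * c I $ j) \<le> B0 $ j)}"

definition Fobj :: "('k::finite) set set \<Rightarrow> real^'k \<Rightarrow> real^('k set) \<Rightarrow> real^'k^'k \<Rightarrow> ereal" where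
  "Fobj \<I> a \<nu> A = (let M = (\<Sum>I\<in>\<I>. \<nu> $ I *\<^sub>R restr_inv A I) in
      if a \<in> range (\<lambda>x. M *v x) then ereal (a \<bullet> (mp_pinv M *v a)) else \<infinity>)"

end

theory Submission
  imports Defs
begin

(* For positive semidefinite M, the value a\<^sup>T M\<^sup>+ a (taken to be \<infinity> when a is not in the
  range of M) is the supremum over x of the concave quadratic 2 a\<^sup>T x - x\<^sup>T M x.  Since
  M = \<Sum>\<^sub>I \<nu>\<^sub>I A\<^sub>I\<^sup>\<dagger> depends continuously on (\<nu>, A) (by Cramer's rule A\<^sub>I\<^sup>\<dagger> v is a
  rational function of the entries of A), F is a supremum of continuous functions and hence
  lower semicontinuous.
  For upper semicontinuity at a point (\<nu>, A) where F is finite, write a = M y as the sum of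
  the vectors b\<^sub>I = \<nu>\<^sub>I A\<^sub>I\<^sup>\<dagger> y over the I with \<nu>\<^sub>I > 0; b\<^sub>I is supported on I.  At nearby
  points (\<nu>', A') this decomposition still certifies F(\<nu>', A') \<le> \<Sum>\<^sub>I b\<^sub>I\<^sup>T A' b\<^sub>I / \<nu>'\<^sub>I,
  a bound that is continuous in (\<nu>', A') and equals F at (\<nu>, A). *)

section \<open>Symmetric matrices and the Moore-Penrose inverse\<close>

lemma sum_matrix_vector_mult: "(\<Sum>i\<in>S. M i) *v x = (\<Sum>i\<in>S. M i *v x)"
  by (induction S rule: infinite_finite_induct) (simp_all add: matrix_vector_mult_add_rdistrib)

lemma bounded_linear_matrix_vector_mult_left: "bounded_linear (\<lambda>A::real^'n^'m. A *v v)"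
  unfolding linear_conv_bounded_linear[symmetric]
  by (rule linearI) (simp_all add: matrix_vector_mult_add_rdistrib scaleR_matrix_vector_assoc)

lemma symmetric_matrix_iff_inner:
  fixes M :: "real^'n^'n"
  shows "transpose M = M \<longleftrightarrow> (\<forall>x y. x \<bullet> (M *v y) = (M *v x) \<bullet> y)"
proof
  assume "transpose M = M"
  then show "\<forall>x y. x \<bullet> (M *v y) = (M *v x) \<bullet> y"
    by (metis dot_lmul_matrix vector_transpose_matrix)
next
  assume sym: "\<forall>x y. x \<bullet> (M *v y) = (M *v x) \<bullet> y"
  have "transpose M *v x = M *v x" for x
  proof -
    have "(transpose M *v x) \<bullet> y = (M *v x) \<bullet> y" for y
      using sym by (simp add: transpose_matrix_vector dot_lmul_matrix)
    then show ?thesis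
      using vector_eq_rdot by blast
  qed
  then show "transpose M = M"
    by (simp add: matrix_eq)
qed

lemma symmetric_matrix_inner:
  fixes M :: "real^'n^'n"
  assumes "transpose M = M"
  shows "x \<bullet> (M *v y) = (M *v x) \<bullet> y"
  using assms by (simp add: symmetric_matrix_iff_inner)

lemma symmetric_matrix_kernel_range_eq_0:
  fixes M :: "real^'n^'n"
  assumes "transpose M = M" "M *v z = 0" "z \<in> range ((*v) M)"
  shows "z = 0"
proof -
  obtain u where "z = M *v u" using assms(3) by blast
  then have "z \<bullet> z = u \<bullet> (M *v z)"
    using symmetric_matrix_inner[OF assms(1), of u z] by simp
  then show ?thesis using assms(2) by simp
qed

lemma symmetric_matrix_range_kernel_decomp:
  fixes M :: "real^'n^'n"
  assumes sym: "transpose M = M"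
  obtains w z where "x = M *v w + z" "M *v z = 0"
proof -
  let ?V = "range ((*v) M)"
  have span_V: "span ?V = ?V"
    by (simp add: linear_subspace_image)
  obtain y z where y: "y \<in> ?V" and z: "\<And>v. v \<in> ?V \<Longrightarrow> orthogonal z v" and x: "x = y + z"
    using orthogonal_subspace_decomp_exists[of ?V x] unfolding span_V by blast
  have "(M *v z) \<bullet> (M *v z) = z \<bullet> (M *v (M *v z))"
    using symmetric_matrix_inner[OF sym, of z "M *v z"] by simp
  also have "\<dots> = 0"
    using z[of "M *v (M *v z)"] by (simp add: orthogonal_def)
  finally have "M *v z = 0" by simp
  with x y that show ?thesis by blast
qed

lemma symmetric_matrix_not_in_range:
  fixes M :: "real^'n^'n"
  assumes sym: "transpose M = M" and a: "a \<notin> range ((*v) M)"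
  obtains z where "M *v z = 0" "a \<bullet> z \<noteq> 0"
proof -
  obtain w z where a_eq: "a = M *v w + z" and z: "M *v z = 0"
    using symmetric_matrix_range_kernel_decomp[OF sym] by blast
  have "z \<noteq> 0" using a a_eq by auto
  moreover have "a \<bullet> z = z \<bullet> z"
    using symmetric_matrix_inner[OF sym, of w z] z by (simp add: a_eq inner_add_left)
  ultimately show ?thesis using z that by simp
qed

definition is_pinv :: "real^'n^'n \<Rightarrow> real^'n^'n \<Rightarrow> bool" where
  "is_pinv M X \<longleftrightarrow> M ** X ** M = M \<and> X ** M ** X = X \<and>
     transpose (M ** X) = M ** X \<and> transpose (X ** M) = X ** M"

lemma is_pinv_unique:
  assumes X: "is_pinv M X" and Y: "is_pinv M Y"
  shows "X = Y"
proof -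
  have "X = X ** transpose (M ** X)"
    using X by (simp add: is_pinv_def matrix_mul_assoc)
  also have "\<dots> = X ** transpose X ** transpose (M ** Y ** M)"
    using Y by (simp add: is_pinv_def matrix_transpose_mul matrix_mul_assoc)
  also have "\<dots> = X ** transpose (M ** X) ** transpose (M ** Y)"
    by (simp add: matrix_transpose_mul matrix_mul_assoc)
  also have "\<dots> = X ** M ** Y"
    using X Y by (simp add: is_pinv_def matrix_mul_assoc)
  finally have X_eq: "X = X ** M ** Y" .
  have "Y = transpose (Y ** M) ** Y"
    using Y by (simp add: is_pinv_def)
  also have "\<dots> = transpose (M ** X ** M) ** transpose Y ** Y"
    using X by (simp add: is_pinv_def matrix_transpose_mul)
  also have "\<dots> = transpose (X ** M) ** transpose (Y ** M) ** Y"
    by (simp add: matrix_transpose_mul matrix_mul_assoc)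
  also have "\<dots> = X ** M ** Y ** M ** Y"
    using X Y by (simp add: is_pinv_def matrix_mul_assoc)
  also have "\<dots> = X ** M ** (Y ** M ** Y)"
    by (simp add: matrix_mul_assoc)
  also have "\<dots> = X ** M ** Y"
    using Y by (simp add: is_pinv_def)
  finally show ?thesis using X_eq by simp
qed

lemma symmetric_matrix_range_left_inverse:
  fixes M :: "real^'n^'n"
  assumes sym: "transpose M = M"
  obtains G where "\<And>y. G *v y \<in> range ((*v) M)"
    "\<And>x. x \<in> range ((*v) M) \<Longrightarrow> G *v (M *v x) = x"
proof -
  let ?V = "range ((*v) M)"
  have span_V: "span ?V = ?V"
    by (simp add: linear_subspace_image)
  have "inj_on ((*v) M) (span ?V)"
    unfolding span_V
  proof (rule inj_onI)
    fix x y assume "x \<in> ?V" "y \<in> ?V" and eq: "M *v x = M *v y"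
    then obtain u v where "x = M *v u" "y = M *v v" by blast
    then have "x - y = M *v (u - v)"
      by (simp add: matrix_vector_mult_diff_distrib)
    moreover have "M *v (x - y) = 0"
      using eq by (simp add: matrix_vector_mult_diff_distrib)
    ultimately show "x = y"
      using symmetric_matrix_kernel_range_eq_0[OF sym, of "x - y"] by auto
  qed
  from linear_inj_on_left_inverse[OF matrix_vector_mul_linear this]
  obtain g where "range g \<subseteq> span ?V" "linear g" "\<forall>x\<in>span ?V. g (M *v x) = x"
    by blast
  then show ?thesis
    using that[of "matrix g"] unfolding span_V by (auto simp: matrix_works)
qed

lemma symmetric_matrix_range_projection:
  fixes M G :: "real^'n^'n"
  assumes sym: "transpose M = M"
    and G_range: "\<And>y. G *v y \<in> range ((*v) M)"
    and G_inv: "\<And>x. x \<in> range ((*v) M) \<Longrightarrow> G *v (M *v x) = x"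
  shows "M ** (G ** M) = M" "transpose (G ** M) = G ** M"
proof -
  let ?P = "G ** M"
  have P_range: "?P *v x \<in> range ((*v) M)" for x
    using G_range by (simp add: matrix_vector_mul_assoc[symmetric])
  have "M *v (?P *v x) = M *v x" for x
  proof -
    obtain w z where x: "x = M *v w + z" and z: "M *v z = 0"
      using symmetric_matrix_range_kernel_decomp[OF sym] by blast
    then show ?thesis
      using G_inv[of "M *v w"] by (simp add: matrix_vector_right_distrib matrix_vector_mul_assoc[symmetric])
  qed
  then show MP: "M ** ?P = M"
    by (simp add: matrix_eq matrix_vector_mul_assoc[symmetric])
  \<comment> \<open>\<open>x - P x\<close> lies in the kernel of \<open>M\<close>, which is orthogonal to the range containing \<open>P y\<close>\<close>
  have orth: "(x - ?P *v x) \<bullet> (?P *v y) = 0" for x y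
  proof -
    obtain u where "?P *v y = M *v u" using P_range by blast
    moreover have "M *v (x - ?P *v x) = 0"
      using MP by (simp add: matrix_vector_mult_diff_distrib matrix_vector_mul_assoc)
    ultimately show ?thesis
      using symmetric_matrix_inner[OF sym, of "x - ?P *v x" u] by simp
  qed
  have "x \<bullet> (?P *v y) = (?P *v x) \<bullet> y" for x y
  proof -
    have "x \<bullet> (?P *v y) = (?P *v x) \<bullet> (?P *v y)"
      using orth[of x y] by (simp add: inner_diff_left)
    also have "\<dots> = (?P *v x) \<bullet> y"
      using orth[of y x] by (simp add: inner_diff_left inner_commute[of "?P *v x"])
    finally show ?thesis .
  qed
  then show "transpose ?P = ?P"
    by (simp add: symmetric_matrix_iff_inner)
qed

lemma symmetric_matrix_has_pinv:
  fixes M :: "real^'n^'n"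
  assumes sym: "transpose M = M"
  shows "\<exists>X. is_pinv M X"
proof -
  obtain G where G_range: "\<And>y. G *v y \<in> range ((*v) M)"
    and G_inv: "\<And>x. x \<in> range ((*v) M) \<Longrightarrow> G *v (M *v x) = x"
    using symmetric_matrix_range_left_inverse[OF sym] by blast
  define P where "P = G ** M"
  have MP: "M ** P = M" and P_sym: "transpose P = P"
    unfolding P_def using symmetric_matrix_range_projection[OF sym G_range G_inv] by auto
  have P_id: "P *v x = x" if "x \<in> range ((*v) M)" for x
    using G_inv that by (simp add: P_def matrix_vector_mul_assoc[symmetric])
  have PM: "P ** M = M"
    using P_id by (simp add: matrix_eq matrix_vector_mul_assoc[symmetric])
  have PG: "P ** G = G"
    using P_id G_range by (simp add: matrix_eq matrix_vector_mul_assoc[symmetric])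
  define X where "X = G ** P"
  have "M *v (G *v (P *v x)) = P *v x" for x
  proof -
    obtain u where u: "P *v x = M *v u"
      using G_range by (auto simp: P_def matrix_vector_mul_assoc[symmetric])
    have "M *v (G *v (M *v u)) = (M ** P) *v u"
      by (simp add: P_def matrix_vector_mul_assoc)
    then show ?thesis
      using MP u by simp
  qed
  then have MX: "M ** X = P"
    by (simp add: X_def matrix_eq matrix_vector_mul_assoc[symmetric])
  have XM: "X ** M = P"
    using PM by (simp add: X_def P_def matrix_mul_assoc[symmetric])
  have "X ** M ** X = X"
    using PG by (simp add: XM) (simp add: X_def matrix_mul_assoc)
  then have "is_pinv M X"
    using MX XM PM P_sym by (simp add: is_pinv_def)
  then show ?thesis ..
qed

lemma is_pinv_mp_pinv:
  fixes M :: "real^'n^'n"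
  assumes "transpose M = M"
  shows "is_pinv M (mp_pinv M)"
proof -
  have "\<exists>!X. is_pinv M X"
    using symmetric_matrix_has_pinv[OF assms] is_pinv_unique by blast
  then show ?thesis
    unfolding mp_pinv_def is_pinv_def[symmetric] by (rule theI')
qed

definition psd :: "real^'n^'n \<Rightarrow> bool" where
  "psd M \<longleftrightarrow> transpose M = M \<and> (\<forall>x. 0 \<le> x \<bullet> (M *v x))"

lemma psd_quadratic_le:
  fixes N :: "real^'n^'n"
  assumes "psd N"
  shows "2 * (z \<bullet> (N *v y)) - y \<bullet> (N *v y) \<le> z \<bullet> (N *v z)"
proof -
  have "y \<bullet> (N *v z) = z \<bullet> (N *v y)"
    using assms symmetric_matrix_inner[of N y z] by (simp add: psd_def inner_commute)
  moreover have "0 \<le> (z - y) \<bullet> (N *v (z - y))"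
    using assms by (simp add: psd_def)
  ultimately show ?thesis
    by (simp add: matrix_vector_mult_diff_distrib inner_diff_left inner_diff_right)
qed

lemma psd_scaleR:
  assumes "psd N" "0 \<le> c"
  shows "psd (c *\<^sub>R N)"
  using assms by (simp add: psd_def transpose_scalar scaleR_matrix_vector_assoc[symmetric])

section \<open>The quadratic form of the pseudo-inverse\<close>

definition pinv_form :: "real^'n^'n \<Rightarrow> real^'n \<Rightarrow> ereal" where
  "pinv_form M a = (if a \<in> range ((*v) M) then ereal (a \<bullet> (mp_pinv M *v a)) else \<infinity>)"

lemma pinv_form_range:
  fixes M :: "real^'n^'n"
  assumes sym: "transpose M = M"
  shows "pinv_form M (M *v y) = ereal (y \<bullet> (M *v y))"
proof -
  have "(M *v y) \<bullet> (mp_pinv M *v (M *v y)) = y \<bullet> (M *v (mp_pinv M *v (M *v y)))"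
    using symmetric_matrix_inner[OF sym, of y "mp_pinv M *v (M *v y)"] by simp
  also have "\<dots> = y \<bullet> ((M ** mp_pinv M ** M) *v y)"
    by (simp add: matrix_vector_mul_assoc matrix_mul_assoc)
  also have "\<dots> = y \<bullet> (M *v y)"
    using is_pinv_mp_pinv[OF sym] by (simp add: is_pinv_def)
  finally show ?thesis
    by (simp add: pinv_form_def)
qed

lemma pinv_form_eq_SUP:
  fixes M :: "real^'n^'n"
  assumes "psd M"
  shows "pinv_form M a = (SUP x. ereal (2 * (a \<bullet> x) - x \<bullet> (M *v x)))"
proof (cases "a \<in> range ((*v) M)")
  case True
  then obtain y where a: "a = M *v y" by blast
  have sym: "transpose M = M" using assms by (simp add: psd_def)
  have le: "ereal (2 * (a \<bullet> x) - x \<bullet> (M *v x)) \<le> ereal (y \<bullet> (M *v y))" for x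
    using psd_quadratic_le[OF assms, of y x] symmetric_matrix_inner[OF sym, of y x]
    by (simp add: a inner_commute)
  have attained: "2 * (a \<bullet> y) - y \<bullet> (M *v y) = y \<bullet> (M *v y)"
    by (simp add: a inner_commute)
  have "(SUP x. ereal (2 * (a \<bullet> x) - x \<bullet> (M *v x))) = ereal (y \<bullet> (M *v y))"
  proof (rule antisym)
    show "(SUP x. ereal (2 * (a \<bullet> x) - x \<bullet> (M *v x))) \<le> ereal (y \<bullet> (M *v y))"
      by (rule SUP_least) (rule le)
    show "ereal (y \<bullet> (M *v y)) \<le> (SUP x. ereal (2 * (a \<bullet> x) - x \<bullet> (M *v x)))"
      by (rule SUP_upper2[of y]) (simp_all add: attained)
  qed
  then show ?thesis
    using pinv_form_range[OF sym] by (simp add: a)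
next
  case False
  have sym: "transpose M = M" using assms by (simp add: psd_def)
  obtain z where z: "M *v z = 0" "a \<bullet> z \<noteq> 0"
    using symmetric_matrix_not_in_range[OF sym False] by blast
  \<comment> \<open>along the kernel direction \<open>z\<close> the concave function is linear and unbounded\<close>
  have "ereal r \<le> (SUP x. ereal (2 * (a \<bullet> x) - x \<bullet> (M *v x)))" for r
  proof -
    let ?x = "(r / (2 * (a \<bullet> z))) *\<^sub>R z"
    have "2 * (a \<bullet> ?x) - ?x \<bullet> (M *v ?x) = r"
      using z by (simp add: matrix_vector_mult_scaleR)
    then show ?thesis
      by (intro SUP_upper2[of ?x]) simp_all
  qed
  then have "(SUP x. ereal (2 * (a \<bullet> x) - x \<bullet> (M *v x))) = \<infinity>"
    by (rule ereal_top)
  then show ?thesis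
    using False by (simp add: pinv_form_def)
qed

lemma pinv_form_lower_semicontinuous:
  fixes M :: "'a::topological_space \<Rightarrow> real^'n^'n"
  assumes cont: "\<And>x. continuous_on S (\<lambda>q. x \<bullet> (M q *v x))"
    and psd: "\<And>q. q \<in> S \<Longrightarrow> psd (M q)"
    and p: "p \<in> S" and l: "l < pinv_form (M p) a"
  shows "\<forall>\<^sub>F q in at p within S. l < pinv_form (M q) a"
proof -
  obtain x where x: "l < ereal (2 * (a \<bullet> x) - x \<bullet> (M p *v x))"
    using l unfolding pinv_form_eq_SUP[OF psd[OF p]] less_SUP_iff by blast
  have "((\<lambda>q. x \<bullet> (M q *v x)) \<longlongrightarrow> x \<bullet> (M p *v x)) (at p within S)"
    using cont[of x] p by (simp add: continuous_on_def)
  then have "((\<lambda>q. ereal (2 * (a \<bullet> x) - x \<bullet> (M q *v x)))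
      \<longlongrightarrow> ereal (2 * (a \<bullet> x) - x \<bullet> (M p *v x))) (at p within S)"
    unfolding lim_ereal by (rule tendsto_diff[OF tendsto_const])
  then have "\<forall>\<^sub>F q in at p within S. l < ereal (2 * (a \<bullet> x) - x \<bullet> (M q *v x))"
    using x by (rule order_tendstoD)
  moreover have "\<forall>\<^sub>F q in at p within S. q \<in> S"
    by (simp add: eventually_at_filter)
  ultimately show ?thesis
  proof eventually_elim
    case (elim q)
    then show ?case
      unfolding pinv_form_eq_SUP[OF psd[OF elim(2)]] less_SUP_iff by blast
  qed
qed

lemma pinv_form_le_sum:
  fixes M :: "real^'n^'n" and N :: "'i \<Rightarrow> real^'n^'n"
  assumes M: "psd M" and N: "\<And>I. I \<in> J \<Longrightarrow> psd (N I)"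
    and dominated: "\<And>x. (\<Sum>I\<in>J. x \<bullet> (N I *v x)) \<le> x \<bullet> (M *v x)"
  shows "pinv_form M (\<Sum>I\<in>J. N I *v z I) \<le> ereal (\<Sum>I\<in>J. z I \<bullet> (N I *v z I))"
  unfolding pinv_form_eq_SUP[OF M]
proof (rule SUP_least)
  fix x
  have "(\<Sum>I\<in>J. N I *v z I) \<bullet> x = (\<Sum>I\<in>J. z I \<bullet> (N I *v x))"
    unfolding inner_sum_left
    using N by (intro sum.cong) (auto simp: psd_def symmetric_matrix_inner)
  then have "2 * ((\<Sum>I\<in>J. N I *v z I) \<bullet> x) - x \<bullet> (M *v x)
      \<le> (\<Sum>I\<in>J. 2 * (z I \<bullet> (N I *v x)) - x \<bullet> (N I *v x))"
    using dominated[of x] by (simp add: sum_subtractf sum_distrib_left)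
  also have "\<dots> \<le> (\<Sum>I\<in>J. z I \<bullet> (N I *v z I))"
    using N by (intro sum_mono psd_quadratic_le) auto
  finally show "ereal (2 * ((\<Sum>I\<in>J. N I *v z I) \<bullet> x) - x \<bullet> (M *v x))
      \<le> ereal (\<Sum>I\<in>J. z I \<bullet> (N I *v z I))"
    by simp
qed

section \<open>Restricted inverses\<close>

definition supported_on :: "'k set \<Rightarrow> real^'k \<Rightarrow> bool" where
  "supported_on I x \<longleftrightarrow> (\<forall>i. i \<notin> I \<longrightarrow> x $ i = 0)"

definition coord_proj :: "'k set \<Rightarrow> real^'k \<Rightarrow> real^'k" where
  "coord_proj I v = (\<chi> i. if i \<in> I then v $ i else 0)"

lemma inner_supported_on_cong:
  assumes "supported_on I d" "\<And>i. i \<in> I \<Longrightarrow> u $ i = v $ i"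
  shows "d \<bullet> u = d \<bullet> v"
  unfolding inner_vec_def using assms by (intro sum.cong) (auto simp: supported_on_def)

lemma linear_coord_proj: "linear (coord_proj I)"
  by (rule linearI) (simp_all add: coord_proj_def vec_eq_iff)

lemma spd_symmetric: "A \<in> spd \<Longrightarrow> transpose A = A"
  by (simp add: spd_def)

lemma spd_psd:
  assumes "A \<in> spd"
  shows "psd A"
proof -
  have "0 \<le> x \<bullet> (A *v x)" for x
    using assms by (cases "x = 0") (auto simp: spd_def less_imp_le)
  then show ?thesis
    using assms by (simp add: psd_def spd_def)
qed

lemma spd_supported_on_eq_0:
  assumes A: "A \<in> spd" and d: "supported_on I d" and Ad: "\<And>i. i \<in> I \<Longrightarrow> (A *v d) $ i = 0"
  shows "d = 0"
proof -
  have "d \<bullet> (A *v d) = d \<bullet> 0"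
    using d Ad by (intro inner_supported_on_cong) auto
  then show ?thesis
    using A by (auto simp: spd_def)
qed

text \<open>The block matrix \<open>diag(A\<^sub>I\<^sub>I, Id)\<close>: solving it against \<open>P\<^sub>I\<^sup>T P\<^sub>I v\<close> is the
  system defining \<open>A\<^sub>I\<^sup>\<dagger> v\<close>.\<close>
definition restr_system :: "real^'k^'k \<Rightarrow> 'k set \<Rightarrow> real^'k^'k" where
  "restr_system A I =
     (\<chi> i j. if i \<in> I then (if j \<in> I then A $ i $ j else 0) else (if i = j then 1 else 0))"

lemma restr_system_mult_eq_iff:
  "restr_system A I *v x = coord_proj I v \<longleftrightarrow>
     supported_on I x \<and> (\<forall>i\<in>I. (A *v x) $ i = v $ i)"
proof -
  have row: "(restr_system A I *v x) $ i =
      (if i \<in> I then (A *v coord_proj I x) $ i else x $ i)" for i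
    by (cases "i \<in> I")
      (auto simp: restr_system_def coord_proj_def matrix_vector_mult_def
        if_distrib[of "\<lambda>t. t * _"] if_distrib[of "\<lambda>t. _ * t"] cong: if_cong)
  have "coord_proj I x = x" if "supported_on I x"
    using that by (auto simp: supported_on_def coord_proj_def vec_eq_iff)
  then show ?thesis
    by (auto simp: vec_eq_iff row coord_proj_def supported_on_def split: if_splits)
qed

lemma invertible_restr_system:
  assumes A: "A \<in> spd"
  shows "invertible (restr_system A I)"
proof -
  have "x = 0" if "restr_system A I *v x = 0" for x
  proof -
    have "restr_system A I *v x = coord_proj I 0"
      using that by (simp add: coord_proj_def vec_eq_iff)
    then show ?thesis
      unfolding restr_system_mult_eq_iff using spd_supported_on_eq_0[OF A] by auto
  qed
  then show ?thesis
    unfolding invertible_left_inverse matrix_left_invertible_ker by blast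
qed

lemma restr_system_mult_restr_inv:
  assumes A: "A \<in> spd"
  shows "restr_system A I *v (restr_inv A I *v v) = coord_proj I v"
proof -
  obtain B where B: "restr_system A I ** B = mat 1" "B ** restr_system A I = mat 1"
    using invertible_restr_system[OF A] unfolding invertible_def by blast
  have solution_iff: "restr_system A I *v x = coord_proj I w \<longleftrightarrow> x = B *v coord_proj I w" for x w
    using B by (metis matrix_vector_mul_assoc matrix_vector_mul_lid)
  have "restr_inv A I = matrix (\<lambda>w. B *v coord_proj I w)"
    unfolding restr_inv_def restr_system_mult_eq_iff[symmetric] supported_on_def[symmetric]
    by (simp add: solution_iff)
  moreover have "linear (\<lambda>w. B *v coord_proj I w)"
    using linear_coord_proj by (intro linear_compose[unfolded o_def, OF _ matrix_vector_mul_linear])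
  ultimately show ?thesis
    by (simp add: matrix_works solution_iff)
qed

lemma restr_inv_eq_iff:
  assumes A: "A \<in> spd"
  shows "restr_inv A I *v v = x \<longleftrightarrow> supported_on I x \<and> (\<forall>i\<in>I. (A *v x) $ i = v $ i)"
proof -
  have "inj ((*v) (restr_system A I))"
    using invertible_restr_system[OF A]
    unfolding invertible_left_inverse matrix_left_invertible_injective .
  then show ?thesis
    unfolding restr_system_mult_eq_iff[symmetric] using restr_system_mult_restr_inv[OF A]
    by (metis injD)
qed

lemma restr_inv_supported_on: "A \<in> spd \<Longrightarrow> supported_on I (restr_inv A I *v v)"
  using restr_inv_eq_iff by blast

lemma restr_inv_solves: "A \<in> spd \<Longrightarrow> i \<in> I \<Longrightarrow> (A *v (restr_inv A I *v v)) $ i = v $ i"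
  using restr_inv_eq_iff by blast

lemma restr_inv_mult_supported_on:
  "A \<in> spd \<Longrightarrow> supported_on I w \<Longrightarrow> restr_inv A I *v (A *v w) = w"
  by (simp add: restr_inv_eq_iff)

lemma inner_restr_inv:
  assumes A: "A \<in> spd"
  shows "u \<bullet> (restr_inv A I *v v) = (restr_inv A I *v u) \<bullet> (A *v (restr_inv A I *v v))"
proof -
  let ?Ru = "restr_inv A I *v u" and ?Rv = "restr_inv A I *v v"
  have "u \<bullet> ?Rv = ?Rv \<bullet> (A *v ?Ru)"
    using restr_inv_supported_on[OF A] restr_inv_solves[OF A]
    by (subst inner_commute, intro inner_supported_on_cong) auto
  also have "\<dots> = ?Ru \<bullet> (A *v ?Rv)"
    using symmetric_matrix_inner[OF spd_symmetric[OF A], of ?Rv ?Ru] by (simp add: inner_commute)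
  finally show ?thesis .
qed

lemma psd_restr_inv:
  assumes A: "A \<in> spd"
  shows "psd (restr_inv A I)"
proof -
  have "u \<bullet> (restr_inv A I *v v) = (restr_inv A I *v u) \<bullet> v" for u v
    using inner_restr_inv[OF A, of u I v] inner_restr_inv[OF A, of v I u]
      symmetric_matrix_inner[OF spd_symmetric[OF A], of "restr_inv A I *v u" "restr_inv A I *v v"]
    by (simp add: inner_commute)
  moreover have "0 \<le> v \<bullet> (restr_inv A I *v v)" for v
    using inner_restr_inv[OF A, of v I v] spd_psd[OF A] by (simp add: psd_def)
  ultimately show ?thesis
    by (simp add: psd_def symmetric_matrix_iff_inner)
qed

lemma continuous_on_det:
  fixes f :: "'a::topological_space \<Rightarrow> real^'n^'n"
  assumes "continuous_on S f"
  shows "continuous_on S (\<lambda>x. det (f x))"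
  unfolding det_def by (intro continuous_intros assms)

lemma continuous_on_If_const:
  "continuous_on S f \<Longrightarrow> continuous_on S g \<Longrightarrow> continuous_on S (\<lambda>x. if P then f x else g x)"
  by (cases P) simp_all

lemma continuous_on_restr_inv: "continuous_on spd (\<lambda>A. restr_inv A I *v v)"
proof -
  let ?E = "\<lambda>A. restr_system A I" and ?b = "coord_proj I v"
  define cramer_sol where
    "cramer_sol A = (\<chi> k. det (\<chi> i j. if j = k then ?b $ i else ?E A $ i $ j) / det (?E A))" for A
  have "continuous_on spd cramer_sol"
    unfolding cramer_sol_def restr_system_def
    using invertible_restr_system[unfolded restr_system_def]
    by (intro continuous_on_vec_lambda continuous_on_divide continuous_on_det
        continuous_on_If_const continuous_intros) (auto simp: invertible_det_nz)
  moreover have "cramer_sol A = restr_inv A I *v v" if "A \<in> spd" for A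
    using cramer[where A = "?E A" and x = "restr_inv A I *v v" and b = ?b]
      restr_system_mult_restr_inv[OF that] invertible_restr_system[OF that]
    by (simp add: invertible_det_nz cramer_sol_def)
  ultimately show ?thesis
    by (rule continuous_on_eq)
qed

section \<open>Continuity of F\<close>

definition info_matrix :: "'k set set \<Rightarrow> real^('k set) \<Rightarrow> real^'k^'k \<Rightarrow> real^'k^'k" where
  "info_matrix \<I> \<nu> A = (\<Sum>I\<in>\<I>. \<nu> $ I *\<^sub>R restr_inv A I)"

lemma Fobj_eq_pinv_form: "Fobj \<I> a \<nu> A = pinv_form (info_matrix \<I> \<nu> A) a"
  by (simp add: Fobj_def pinv_form_def info_matrix_def)

lemma info_matrix_mult: "info_matrix \<I> \<nu> A *v x = (\<Sum>I\<in>\<I>. \<nu> $ I *\<^sub>R (restr_inv A I *v x))"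
  by (simp add: info_matrix_def sum_matrix_vector_mult scaleR_matrix_vector_assoc)

lemma info_matrix_quadratic:
  "x \<bullet> (info_matrix \<I> \<nu> A *v x) = (\<Sum>I\<in>\<I>. \<nu> $ I * (x \<bullet> (restr_inv A I *v x)))"
  by (simp add: info_matrix_mult inner_sum_right)

lemma psd_info_matrix:
  assumes A: "A \<in> spd" and \<nu>: "\<And>I. I \<in> \<I> \<Longrightarrow> 0 \<le> \<nu> $ I"
  shows "psd (info_matrix \<I> \<nu> A)"
proof -
  have R_sym: "x \<bullet> (restr_inv A I *v y) = (restr_inv A I *v x) \<bullet> y" for x y I
    using psd_restr_inv[OF A] by (simp add: psd_def symmetric_matrix_iff_inner)
  have "x \<bullet> (info_matrix \<I> \<nu> A *v y) = (info_matrix \<I> \<nu> A *v x) \<bullet> y" for x y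
    by (simp add: info_matrix_mult inner_sum_left inner_sum_right R_sym)
  moreover have "0 \<le> x \<bullet> (info_matrix \<I> \<nu> A *v x)" for x
    unfolding info_matrix_quadratic using psd_restr_inv[OF A] \<nu>
    by (intro sum_nonneg) (simp add: psd_def)
  ultimately show ?thesis
    by (simp add: psd_def symmetric_matrix_iff_inner)
qed

lemma continuous_on_info_matrix_quadratic:
  assumes "S \<subseteq> UNIV \<times> spd"
  shows "continuous_on S (\<lambda>q. x \<bullet> (info_matrix \<I> (fst q) (snd q) *v x))"
  unfolding info_matrix_quadratic
  using assms
  by (intro continuous_intros continuous_on_compose2[OF continuous_on_restr_inv]) auto

lemma info_matrix_mult_positive_part:
  assumes "\<And>I. I \<in> \<I> \<Longrightarrow> 0 \<le> \<nu> $ I"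
  shows "info_matrix \<I> \<nu> A *v y = (\<Sum>I\<in>{I\<in>\<I>. 0 < \<nu> $ I}. \<nu> $ I *\<^sub>R (restr_inv A I *v y))"
  unfolding info_matrix_mult
  using assms by (intro sum.mono_neutral_right) (auto simp: less_le)

lemma pinv_form_info_matrix_le:
  assumes A: "A \<in> spd" and \<nu>: "\<And>I. I \<in> \<I> \<Longrightarrow> 0 \<le> \<nu> $ I"
    and J: "J \<subseteq> \<I>" "\<And>I. I \<in> J \<Longrightarrow> 0 < \<nu> $ I"
    and b: "\<And>I. I \<in> J \<Longrightarrow> supported_on I (b I)"
  shows "pinv_form (info_matrix \<I> \<nu> A) (\<Sum>I\<in>J. b I) \<le> ereal (\<Sum>I\<in>J. (A *v b I) \<bullet> b I / \<nu> $ I)"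
proof -
  define N where "N I = \<nu> $ I *\<^sub>R restr_inv A I" for I
  define z where "z I = (1 / \<nu> $ I) *\<^sub>R (A *v b I)" for I
  have Nz: "N I *v z I = b I" if "I \<in> J" for I
    using J(2)[OF that] restr_inv_mult_supported_on[OF A b[OF that]]
    by (simp add: N_def z_def scaleR_matrix_vector_assoc[symmetric] matrix_vector_mult_scaleR)
  have "pinv_form (info_matrix \<I> \<nu> A) (\<Sum>I\<in>J. N I *v z I) \<le> ereal (\<Sum>I\<in>J. z I \<bullet> (N I *v z I))"
  proof (rule pinv_form_le_sum)
    show "psd (info_matrix \<I> \<nu> A)"
      using A \<nu> by (rule psd_info_matrix)
    show "psd (N I)" if "I \<in> J" for I
      using psd_restr_inv[OF A] J(2)[OF that] by (simp add: N_def psd_scaleR)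
    show "(\<Sum>I\<in>J. x \<bullet> (N I *v x)) \<le> x \<bullet> (info_matrix \<I> \<nu> A *v x)" for x
      unfolding info_matrix_quadratic
      using J(1) \<nu> psd_restr_inv[OF A]
      by (simp add: N_def scaleR_matrix_vector_assoc[symmetric])
         (intro sum_mono2; auto simp: psd_def)
  qed
  moreover have "z I \<bullet> (N I *v z I) = (A *v b I) \<bullet> b I / \<nu> $ I" if "I \<in> J" for I
    using Nz[OF that] by (simp add: z_def)
  ultimately show ?thesis
    using Nz by (simp cong: sum.cong)
qed

lemma pinv_form_info_matrix_mult:
  assumes A: "A \<in> spd" and \<nu>: "\<And>I. I \<in> \<I> \<Longrightarrow> 0 \<le> \<nu> $ I"
    and b: "\<And>I. b I = \<nu> $ I *\<^sub>R (restr_inv A I *v y)"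
  shows "pinv_form (info_matrix \<I> \<nu> A) (info_matrix \<I> \<nu> A *v y) =
           ereal (\<Sum>I\<in>{I\<in>\<I>. 0 < \<nu> $ I}. (A *v b I) \<bullet> b I / \<nu> $ I)"
proof -
  have "(\<Sum>I\<in>{I\<in>\<I>. 0 < \<nu> $ I}. (A *v b I) \<bullet> b I / \<nu> $ I) =
      (\<Sum>I\<in>{I\<in>\<I>. 0 < \<nu> $ I}. \<nu> $ I * (y \<bullet> (restr_inv A I *v y)))"
    using inner_restr_inv[OF A, of y _ y]
    by (intro sum.cong) (auto simp: b matrix_vector_mult_scaleR inner_commute)
  also have "\<dots> = y \<bullet> (info_matrix \<I> \<nu> A *v y)"
    unfolding info_matrix_quadratic using \<nu> by (intro sum.mono_neutral_left) (auto simp: less_le)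
  finally show ?thesis
    using pinv_form_range[of "info_matrix \<I> \<nu> A" y] psd_info_matrix[OF A \<nu>] by (simp add: psd_def)
qed

lemma pinv_form_info_matrix_upper_semicontinuous:
  fixes S :: "((real^('k set)) \<times> (real^'k^'k)) set"
  assumes S: "\<And>q. q \<in> S \<Longrightarrow> snd q \<in> spd \<and> (\<forall>I\<in>\<I>. 0 \<le> fst q $ I)"
    and p: "p \<in> S" and u: "pinv_form (info_matrix \<I> (fst p) (snd p)) a < u"
  shows "\<forall>\<^sub>F q in at p within S. pinv_form (info_matrix \<I> (fst q) (snd q)) a < u"
proof -
  obtain \<nu>0 A0 where p_eq: "p = (\<nu>0, A0)" by (cases p)
  have A0: "A0 \<in> spd" and \<nu>0: "\<And>I. I \<in> \<I> \<Longrightarrow> 0 \<le> \<nu>0 $ I"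
    using S[OF p] by (auto simp: p_eq)
  obtain y where a: "a = info_matrix \<I> \<nu>0 A0 *v y"
    using u by (auto simp: p_eq pinv_form_def split: if_splits)
  define J where "J = {I\<in>\<I>. 0 < \<nu>0 $ I}"
  define b where "b I = \<nu>0 $ I *\<^sub>R (restr_inv A0 I *v y)" for I
  \<comment> \<open>the bound of \<open>pinv_form_info_matrix_le\<close> for the decomposition of \<open>a\<close> at \<open>p\<close>;
    it is continuous at \<open>p\<close> and attains the value there\<close>
  define G where "G q = (\<Sum>I\<in>J. (snd q *v b I) \<bullet> b I / fst q $ I)"
    for q :: "(real^('k set)) \<times> (real^'k^'k)"
  have "ereal (G p) < u"
    using u pinv_form_info_matrix_mult[OF A0 \<nu>0 b_def] by (simp add: a p_eq G_def J_def)
  moreover have "isCont G p"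
    unfolding G_def
    by (intro continuous_intros bounded_linear.isCont[OF bounded_linear_matrix_vector_mult_left])
       (auto simp: p_eq J_def)
  ultimately have "\<forall>\<^sub>F q in at p within S. ereal (G q) < u"
    by (intro order_tendstoD(2)[of "\<lambda>q. ereal (G q)"])
       (auto simp: isCont_def lim_ereal intro: tendsto_within_subset)
  moreover have "\<forall>\<^sub>F q in at p within S. \<forall>I\<in>J. 0 < fst q $ I"
    by (intro eventually_ball_finite ballI
        order_tendstoD(1)[OF tendsto_vec_nth[OF tendsto_fst[OF tendsto_ident_at]]])
       (auto simp: p_eq J_def)
  moreover have "\<forall>\<^sub>F q in at p within S. q \<in> S"
    by (simp add: eventually_at_filter)
  ultimately show ?thesis
  proof eventually_elim
    case (elim q)
    have "a = (\<Sum>I\<in>J. b I)"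
      using info_matrix_mult_positive_part[OF \<nu>0] by (simp add: a J_def b_def)
    then have "pinv_form (info_matrix \<I> (fst q) (snd q)) a \<le> ereal (G q)"
      unfolding G_def using S[OF elim(3)] elim(2) restr_inv_supported_on[OF A0]
      by (simp only:) (intro pinv_form_info_matrix_le; auto simp: J_def b_def supported_on_def)
    then show ?case
      using elim(1) by simp
  qed
qed

theorem lemmaE6:
  fixes \<I> :: "'k::finite set set" and a :: "real^'k"
    and c :: "'k set \<Rightarrow> real^'m::finite" and B0 :: "real^'m"
  assumes "\<forall>I\<in>\<I>. I \<noteq> {}"
    and "a \<noteq> 0"
    and "\<forall>I\<in>\<I>. \<forall>j. c I $ j \<ge> 0"
    and "\<forall>j. B0 $ j > 0"
  shows "continuous_on (feasK \<I> c B0 \<times> spd) (\<lambda>(\<nu>, A). Fobj \<I> a \<nu> A)"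
proof -
  let ?S = "feasK \<I> c B0 \<times> spd"
  let ?F = "\<lambda>q. pinv_form (info_matrix \<I> (fst q) (snd q)) a"
  have S: "snd q \<in> spd \<and> (\<forall>I\<in>\<I>. 0 \<le> fst q $ I)" if "q \<in> ?S" for q
    using that by (auto simp: feasK_def)
  have "continuous_on ?S ?F"
    unfolding continuous_on_def order_tendsto_iff
  proof (intro ballI conjI allI impI)
    fix p l assume "p \<in> ?S" "l < ?F p"
    then show "\<forall>\<^sub>F q in at p within ?S. l < ?F q"
      using S by (intro pinv_form_lower_semicontinuous continuous_on_info_matrix_quadratic psd_info_matrix)
        auto
  next
    fix p u assume "p \<in> ?S" "?F p < u"
    then show "\<forall>\<^sub>F q in at p within ?S. ?F q < u"
      using S by (intro pinv_form_info_matrix_upper_semicontinuous) auto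
  qed
  then show ?thesis
    by (simp add: Fobj_eq_pinv_form case_prod_beta)
qed

end
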